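(* Let $\mathcal{C}$ be a category with a faithful functor $Q:\mathcal{C}\to\mathbf{Set}$ for which there exist an object $A_0$ and an element $x_0\in Q(A_0)$ satisfying (1Q) and (2Q) below. Then every automorphism of $\mathcal{C}$ is potentially quasi-inner.
   Context: (1Q): for every object $A$ of $\mathcal{C}$ and every $a\in Q(A)$ there is exactly one morphism $\alpha:A_0\to A$ with $Q(\alpha)(x_0)=a$. (2Q): for every object $A$ there is a morphism $\alpha:A\to A_0$ such that $Q(\alpha)$ is surjective. For objects $A,B$, a map $s:Q(A)\to Q(B)$ is a $\mathcal{C}$-bijection if $s$ is injective and for any two morphisms $\alpha_1,\alpha_2:B\to C$ of $\mathcal{C}$, $Q(\alpha_1)\circ s=Q(\alpha_2)\circ s$ implies $\alpha_1=\alpha_2$. An automorphism $\Phi$ of $\mathcal{C}$ is potentially quasi-inner if there exists a family of $\mathcal{C}$-bijections $s_A:Q(A)\to Q(\Phi(A))$, $A\in\mathrm{Ob}\,\mathcal{C}$, such that $Q(\Phi(\mu))\circ s_A=s_B\circ Q(\mu)$ for every morphism $\mu:A\to B$. *)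

theory Defs
  imports Main
begin

text \<open>A (small) category, given by a set of objects, a set of morphisms,
  domain, codomain, composition (Comp g f = g \<circ> f) and identities.\<close>

record ('o, 'm) cat =
  Ob  :: "'o set"
  Ar  :: "'m set"
  Dom :: "'m \<Rightarrow> 'o"
  Cod :: "'m \<Rightarrow> 'o"
  Comp :: "'m \<Rightarrow> 'm \<Rightarrow> 'm"
  Id  :: "'o \<Rightarrow> 'm"

definition hom :: "('o, 'm) cat \<Rightarrow> 'o \<Rightarrow> 'o \<Rightarrow> 'm set" where
  "hom C A B = {f \<in> Ar C. Dom C f = A \<and> Cod C f = B}"

definition category :: "('o, 'm) cat \<Rightarrow> bool" where
  "category C \<longleftrightarrow>
     (\<forall>f\<in>Ar C. Dom C f \<in> Ob C \<and> Cod C f \<in> Ob C) \<and>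
     (\<forall>A\<in>Ob C. Id C A \<in> hom C A A) \<and>
     (\<forall>f\<in>Ar C. \<forall>g\<in>Ar C. Cod C f = Dom C g \<longrightarrow>
        Comp C g f \<in> hom C (Dom C f) (Cod C g)) \<and>
     (\<forall>f\<in>Ar C. Comp C f (Id C (Dom C f)) = f \<and> Comp C (Id C (Cod C f)) f = f) \<and>
     (\<forall>f\<in>Ar C. \<forall>g\<in>Ar C. \<forall>h\<in>Ar C. Cod C f = Dom C g \<longrightarrow> Cod C g = Dom C h \<longrightarrow>
        Comp C h (Comp C g f) = Comp C (Comp C h g) f)"

text \<open>A functor Q : C \<rightarrow> Set.  Sets are subsets of a fixed type 'e;
  Q(A) = QO A and Q(f) = QM f (considered as a map QO (Dom f) \<rightarrow> QO (Cod f)).\<close>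

definition set_functor :: "('o, 'm) cat \<Rightarrow> ('o \<Rightarrow> 'e set) \<Rightarrow> ('m \<Rightarrow> 'e \<Rightarrow> 'e) \<Rightarrow> bool" where
  "set_functor C QO QM \<longleftrightarrow>
     (\<forall>f\<in>Ar C. QM f ` QO (Dom C f) \<subseteq> QO (Cod C f)) \<and>
     (\<forall>A\<in>Ob C. \<forall>x\<in>QO A. QM (Id C A) x = x) \<and>
     (\<forall>f\<in>Ar C. \<forall>g\<in>Ar C. Cod C f = Dom C g \<longrightarrow>
        (\<forall>x\<in>QO (Dom C f). QM (Comp C g f) x = QM g (QM f x)))"

definition faithful_set_functor :: "('o, 'm) cat \<Rightarrow> ('o \<Rightarrow> 'e set) \<Rightarrow> ('m \<Rightarrow> 'e \<Rightarrow> 'e) \<Rightarrow> bool" where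
  "faithful_set_functor C QO QM \<longleftrightarrow> set_functor C QO QM \<and>
     (\<forall>A\<in>Ob C. \<forall>B\<in>Ob C. \<forall>f\<in>hom C A B. \<forall>g\<in>hom C A B.
        (\<forall>x\<in>QO A. QM f x = QM g x) \<longrightarrow> f = g)"

text \<open>Endofunctors and automorphisms (functors bijective on objects and morphisms;
  the inverse of such a functor is automatically a functor).\<close>

definition endofunctor :: "('o, 'm) cat \<Rightarrow> ('o \<Rightarrow> 'o) \<Rightarrow> ('m \<Rightarrow> 'm) \<Rightarrow> bool" where
  "endofunctor C FO FM \<longleftrightarrow>
     (\<forall>A\<in>Ob C. FO A \<in> Ob C) \<and>
     (\<forall>f\<in>Ar C. FM f \<in> Ar C \<and> Dom C (FM f) = FO (Dom C f) \<and> Cod C (FM f) = FO (Cod C f)) \<and>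
     (\<forall>A\<in>Ob C. FM (Id C A) = Id C (FO A)) \<and>
     (\<forall>f\<in>Ar C. \<forall>g\<in>Ar C. Cod C f = Dom C g \<longrightarrow> FM (Comp C g f) = Comp C (FM g) (FM f))"

definition automorphism :: "('o, 'm) cat \<Rightarrow> ('o \<Rightarrow> 'o) \<Rightarrow> ('m \<Rightarrow> 'm) \<Rightarrow> bool" where
  "automorphism C FO FM \<longleftrightarrow> endofunctor C FO FM \<and>
     bij_betw FO (Ob C) (Ob C) \<and> bij_betw FM (Ar C) (Ar C)"

definition cond_1Q :: "('o, 'm) cat \<Rightarrow> ('o \<Rightarrow> 'e set) \<Rightarrow> ('m \<Rightarrow> 'e \<Rightarrow> 'e) \<Rightarrow> 'o \<Rightarrow> 'e \<Rightarrow> bool" where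
  "cond_1Q C QO QM A0 x0 \<longleftrightarrow>
     (\<forall>A\<in>Ob C. \<forall>a\<in>QO A. \<exists>!\<alpha>. \<alpha> \<in> hom C A0 A \<and> QM \<alpha> x0 = a)"

definition cond_2Q :: "('o, 'm) cat \<Rightarrow> ('o \<Rightarrow> 'e set) \<Rightarrow> ('m \<Rightarrow> 'e \<Rightarrow> 'e) \<Rightarrow> 'o \<Rightarrow> bool" where
  "cond_2Q C QO QM A0 \<longleftrightarrow>
     (\<forall>A\<in>Ob C. \<exists>\<alpha>\<in>hom C A A0. QM \<alpha> ` QO A = QO A0)"

definition C_bijection :: "('o, 'm) cat \<Rightarrow> ('o \<Rightarrow> 'e set) \<Rightarrow> ('m \<Rightarrow> 'e \<Rightarrow> 'e)
    \<Rightarrow> 'o \<Rightarrow> 'o \<Rightarrow> ('e \<Rightarrow> 'e) \<Rightarrow> bool" where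
  "C_bijection C QO QM A B s \<longleftrightarrow>
     s ` QO A \<subseteq> QO B \<and> inj_on s (QO A) \<and>
     (\<forall>D\<in>Ob C. \<forall>\<alpha>1\<in>hom C B D. \<forall>\<alpha>2\<in>hom C B D.
        (\<forall>x\<in>QO A. QM \<alpha>1 (s x) = QM \<alpha>2 (s x)) \<longrightarrow> \<alpha>1 = \<alpha>2)"

definition potentially_quasi_inner :: "('o, 'm) cat \<Rightarrow> ('o \<Rightarrow> 'e set) \<Rightarrow> ('m \<Rightarrow> 'e \<Rightarrow> 'e)
    \<Rightarrow> ('o \<Rightarrow> 'o) \<Rightarrow> ('m \<Rightarrow> 'm) \<Rightarrow> bool" where
  "potentially_quasi_inner C QO QM FO FM \<longleftrightarrow>
     (\<exists>s :: 'o \<Rightarrow> 'e \<Rightarrow> 'e.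
        (\<forall>A\<in>Ob C. C_bijection C QO QM A (FO A) (s A)) \<and>
        (\<forall>\<mu>\<in>Ar C. \<forall>x\<in>QO (Dom C \<mu>).
           QM (FM \<mu>) (s (Dom C \<mu>) x) = s (Cod C \<mu>) (QM \<mu> x)))"

end

theory Submission
  imports Defs
begin

(* By (1Q) the functor Q is represented by (A0, x0): every a in Q(A) is Q(alpha_a)(x0)
   for a unique arrow alpha_a : A0 -> A.  Hence, as in the Yoneda lemma, every y in Q(Phi A0)
   induces a natural family s_A(a) = Q(Phi alpha_a)(y) from Q to Q Phi.  Take y = Q(gamma)(x0)
   with gamma = Phi pi, where pi : Phi^-1 A0 -> A0 is given by (2Q).  Since Q(pi) is surjective
   and Q is faithful, pi and therefore gamma are epimorphisms.  Now s_A(a) = Q(Phi alpha_a o gamma)(x0),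
   so s_A(a) determines Phi alpha_a o gamma, hence Phi alpha_a, hence a.  Two arrows out of Phi A
   agreeing on the image of s_A agree after every Phi alpha; so their preimages under Phi agree
   after every alpha : A0 -> A, and A0 separates arrows because Q is faithful and represented by A0. *)

definition epi :: "('o, 'm) cat \<Rightarrow> 'm \<Rightarrow> 'o \<Rightarrow> 'o \<Rightarrow> bool" where
  "epi C e A B \<longleftrightarrow> e \<in> hom C A B \<and>
     (\<forall>D f g. f \<in> hom C B D \<longrightarrow> g \<in> hom C B D \<longrightarrow> Comp C f e = Comp C g e \<longrightarrow> f = g)"

lemma epi_cancel:
  assumes "epi C e A B" "f \<in> hom C B D" "g \<in> hom C B D" "Comp C f e = Comp C g e"
  shows "f = g"
  using assms unfolding epi_def by blast

lemma category_hom_objects: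
  assumes "category C" "f \<in> hom C A B"
  shows "A \<in> Ob C" "B \<in> Ob C"
  using assms unfolding category_def hom_def by auto

lemma category_comp_hom:
  assumes "category C" "f \<in> hom C A B" "g \<in> hom C B D"
  shows "Comp C g f \<in> hom C A D"
  using assms unfolding category_def hom_def by auto

lemma category_comp_assoc:
  assumes "category C" "f \<in> hom C A B" "g \<in> hom C B D" "h \<in> hom C D E"
  shows "Comp C h (Comp C g f) = Comp C (Comp C h g) f"
  using assms unfolding category_def hom_def by auto

lemma set_functor_map_hom:
  assumes "set_functor C QO QM" "f \<in> hom C A B" "x \<in> QO A"
  shows "QM f x \<in> QO B"
  using assms unfolding set_functor_def hom_def by blast

lemma set_functor_comp:
  assumes "set_functor C QO QM" "f \<in> hom C A B" "g \<in> hom C B D" "x \<in> QO A"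
  shows "QM (Comp C g f) x = QM g (QM f x)"
  using assms unfolding set_functor_def hom_def by auto

lemma faithful_set_functor_eqI:
  assumes "category C" "faithful_set_functor C QO QM" "f \<in> hom C A B" "g \<in> hom C A B"
    and "\<And>x. x \<in> QO A \<Longrightarrow> QM f x = QM g x"
  shows "f = g"
  using assms category_hom_objects[OF assms(1,3)] unfolding faithful_set_functor_def by blast

lemma surjective_map_imp_epi:
  assumes C: "category C" and Q: "faithful_set_functor C QO QM"
    and e: "e \<in> hom C A B" and surj: "QM e ` QO A = QO B"
  shows "epi C e A B"
  unfolding epi_def
proof (intro conjI allI impI e)
  fix D f g assume f: "f \<in> hom C B D" and g: "g \<in> hom C B D" and fe_ge: "Comp C f e = Comp C g e"
  have funct: "set_functor C QO QM" using Q unfolding faithful_set_functor_def by blast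
  show "f = g"
  proof (rule faithful_set_functor_eqI[OF C Q f g])
    fix y assume "y \<in> QO B"
    then obtain x where x: "x \<in> QO A" and y: "y = QM e x" using surj by blast
    show "QM f y = QM g y"
      using set_functor_comp[OF funct e f x] set_functor_comp[OF funct e g x] fe_ge y by simp
  qed
qed

lemma endofunctor_hom:
  assumes "endofunctor C FO FM" "f \<in> hom C A B"
  shows "FM f \<in> hom C (FO A) (FO B)"
  using assms unfolding endofunctor_def hom_def by auto

lemma endofunctor_comp:
  assumes "endofunctor C FO FM" "f \<in> hom C A B" "g \<in> hom C B D"
  shows "FM (Comp C g f) = Comp C (FM g) (FM f)"
  using assms unfolding endofunctor_def hom_def by auto

lemma automorphism_endofunctor: "automorphism C FO FM \<Longrightarrow> endofunctor C FO FM"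
  unfolding automorphism_def by blast

lemma automorphism_arrow_inj:
  assumes "automorphism C FO FM" "f \<in> hom C A B" "g \<in> hom C A' B'" "FM f = FM g"
  shows "f = g"
  using assms unfolding automorphism_def bij_betw_def inj_on_def hom_def by blast

lemma automorphism_obj_surj:
  assumes "automorphism C FO FM" "D \<in> Ob C"
  obtains D' where "D' \<in> Ob C" "FO D' = D"
  using assms unfolding automorphism_def bij_betw_def by (metis imageE)

lemma automorphism_full:
  assumes C: "category C" and \<Phi>: "automorphism C FO FM"
    and X: "X \<in> Ob C" and Y: "Y \<in> Ob C" and f: "f \<in> hom C (FO X) (FO Y)"
  obtains f' where "f' \<in> hom C X Y" "FM f' = f"
proof -
  have "f \<in> FM ` Ar C" using \<Phi> f unfolding automorphism_def bij_betw_def hom_def by auto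
  then obtain f' where f': "f' \<in> Ar C" "FM f' = f" by blast
  have "FO (Dom C f') = FO X" "FO (Cod C f') = FO Y"
    using \<Phi> f f' unfolding automorphism_def endofunctor_def hom_def by auto
  moreover have "Dom C f' \<in> Ob C" "Cod C f' \<in> Ob C"
    using C f'(1) unfolding category_def by auto
  moreover have "inj_on FO (Ob C)" using \<Phi> unfolding automorphism_def bij_betw_def by blast
  ultimately have "f' \<in> hom C X Y" using X Y f'(1) unfolding hom_def inj_on_def by blast
  then show thesis using that f'(2) by blast
qed

lemma automorphism_preserves_epi:
  assumes C: "category C" and \<Phi>: "automorphism C FO FM" and e: "epi C e A B"
  shows "epi C (FM e) (FO A) (FO B)"
  unfolding epi_def
proof (intro conjI allI impI)
  have e_hom: "e \<in> hom C A B" using e unfolding epi_def by blast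
  then show "FM e \<in> hom C (FO A) (FO B)"
    by (rule endofunctor_hom[OF automorphism_endofunctor[OF \<Phi>]])
  fix D f g assume f: "f \<in> hom C (FO B) D" and g: "g \<in> hom C (FO B) D"
    and fe_ge: "Comp C f (FM e) = Comp C g (FM e)"
  have B: "B \<in> Ob C" using category_hom_objects[OF C e_hom] by blast
  obtain D' where D': "D' \<in> Ob C" "FO D' = D"
    using automorphism_obj_surj[OF \<Phi>] category_hom_objects[OF C f] by blast
  obtain f' where f': "f' \<in> hom C B D'" "FM f' = f"
    using automorphism_full[OF C \<Phi> B D'(1)] f D'(2) by blast
  obtain g' where g': "g' \<in> hom C B D'" "FM g' = g"
    using automorphism_full[OF C \<Phi> B D'(1)] g D'(2) by blast
  have "FM (Comp C f' e) = FM (Comp C g' e)"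
    using endofunctor_comp[OF automorphism_endofunctor[OF \<Phi>] e_hom] f' g' fe_ge by simp
  then have "Comp C f' e = Comp C g' e"
    using automorphism_arrow_inj[OF \<Phi>] category_comp_hom[OF C e_hom] f'(1) g'(1) by blast
  then have "f' = g'" using epi_cancel[OF e f'(1) g'(1)] by blast
  then show "f = g" using f'(2) g'(2) by simp
qed

locale represented_faithful_functor =
  fixes C :: "('o, 'm) cat" and QO :: "'o \<Rightarrow> 'e set" and QM :: "'m \<Rightarrow> 'e \<Rightarrow> 'e"
    and A0 :: 'o and x0 :: 'e
  assumes is_category: "category C"
    and faithful: "faithful_set_functor C QO QM"
    and A0: "A0 \<in> Ob C" and x0: "x0 \<in> QO A0"
    and represents: "cond_1Q C QO QM A0 x0"
begin

lemma is_set_functor: "set_functor C QO QM"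
  using faithful unfolding faithful_set_functor_def by blast

definition classifying_arrow :: "'o \<Rightarrow> 'e \<Rightarrow> 'm" where
  "classifying_arrow A a = (THE \<alpha>. \<alpha> \<in> hom C A0 A \<and> QM \<alpha> x0 = a)"

lemma classifying_arrow:
  assumes "A \<in> Ob C" "a \<in> QO A"
  shows "classifying_arrow A a \<in> hom C A0 A" "QM (classifying_arrow A a) x0 = a"
proof -
  have "\<exists>!\<alpha>. \<alpha> \<in> hom C A0 A \<and> QM \<alpha> x0 = a"
    using represents assms unfolding cond_1Q_def by blast
  from theI'[OF this] show "classifying_arrow A a \<in> hom C A0 A" "QM (classifying_arrow A a) x0 = a"
    unfolding classifying_arrow_def by blast+
qed

lemma hom_from_A0_eqI:
  assumes "\<alpha> \<in> hom C A0 A" "\<beta> \<in> hom C A0 A" "QM \<alpha> x0 = QM \<beta> x0"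
  shows "\<alpha> = \<beta>"
proof -
  have "A \<in> Ob C" using category_hom_objects[OF is_category assms(1)] by blast
  moreover have "QM \<alpha> x0 \<in> QO A" using set_functor_map_hom[OF is_set_functor assms(1) x0] .
  ultimately show ?thesis using represents assms unfolding cond_1Q_def by metis
qed

lemma classifying_arrow_eval:
  assumes "\<alpha> \<in> hom C A0 A"
  shows "classifying_arrow A (QM \<alpha> x0) = \<alpha>"
proof (rule hom_from_A0_eqI[OF _ assms])
  have "A \<in> Ob C" "QM \<alpha> x0 \<in> QO A"
    using category_hom_objects[OF is_category assms] set_functor_map_hom[OF is_set_functor assms x0]
    by blast+
  then show "classifying_arrow A (QM \<alpha> x0) \<in> hom C A0 A"
    and "QM (classifying_arrow A (QM \<alpha> x0)) x0 = QM \<alpha> x0"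
    using classifying_arrow by blast+
qed

lemma classifying_arrow_map:
  assumes \<mu>: "\<mu> \<in> hom C A B" and a: "a \<in> QO A"
  shows "classifying_arrow B (QM \<mu> a) = Comp C \<mu> (classifying_arrow A a)"
proof -
  have A: "A \<in> Ob C" using category_hom_objects[OF is_category \<mu>] by blast
  note \<alpha> = classifying_arrow[OF A a]
  have "QM (Comp C \<mu> (classifying_arrow A a)) x0 = QM \<mu> a"
    using set_functor_comp[OF is_set_functor \<alpha>(1) \<mu> x0] \<alpha>(2) by simp
  then show ?thesis
    using classifying_arrow_eval[OF category_comp_hom[OF is_category \<alpha>(1) \<mu>]] by simp
qed

lemma A0_separates:
  assumes f: "f \<in> hom C A D" and g: "g \<in> hom C A D"
    and agree: "\<And>\<alpha>. \<alpha> \<in> hom C A0 A \<Longrightarrow> Comp C f \<alpha> = Comp C g \<alpha>"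
  shows "f = g"
proof (rule faithful_set_functor_eqI[OF is_category faithful f g])
  fix a assume a: "a \<in> QO A"
  have A: "A \<in> Ob C" using category_hom_objects[OF is_category f] by blast
  note \<alpha> = classifying_arrow[OF A a]
  have "QM f a = QM (Comp C f (classifying_arrow A a)) x0"
    using set_functor_comp[OF is_set_functor \<alpha>(1) f x0] \<alpha>(2) by simp
  also have "\<dots> = QM (Comp C g (classifying_arrow A a)) x0" using agree[OF \<alpha>(1)] by simp
  also have "\<dots> = QM g a" using set_functor_comp[OF is_set_functor \<alpha>(1) g x0] \<alpha>(2) by simp
  finally show "QM f a = QM g a" .
qed

text \<open>The family Q \<Rightarrow> Q \<Phi> that the Yoneda lemma associates with y \<in> Q(\<Phi> A0).\<close>

definition induced_family :: "('m \<Rightarrow> 'm) \<Rightarrow> 'e \<Rightarrow> 'o \<Rightarrow> 'e \<Rightarrow> 'e" where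
  "induced_family FM y A a = QM (FM (classifying_arrow A a)) y"

lemma induced_family_natural:
  assumes \<Phi>: "endofunctor C FO FM" and y: "y \<in> QO (FO A0)"
    and \<mu>: "\<mu> \<in> Ar C" and x: "x \<in> QO (Dom C \<mu>)"
  shows "QM (FM \<mu>) (induced_family FM y (Dom C \<mu>) x) = induced_family FM y (Cod C \<mu>) (QM \<mu> x)"
proof -
  let ?A = "Dom C \<mu>" and ?B = "Cod C \<mu>"
  have \<mu>_hom: "\<mu> \<in> hom C ?A ?B" using \<mu> unfolding hom_def by simp
  have A: "?A \<in> Ob C" using category_hom_objects[OF is_category \<mu>_hom] by blast
  note \<alpha> = classifying_arrow[OF A x]
  have "induced_family FM y ?B (QM \<mu> x) = QM (FM (Comp C \<mu> (classifying_arrow ?A x))) y"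
    unfolding induced_family_def classifying_arrow_map[OF \<mu>_hom x] ..
  also have "\<dots> = QM (Comp C (FM \<mu>) (FM (classifying_arrow ?A x))) y"
    using endofunctor_comp[OF \<Phi> \<alpha>(1) \<mu>_hom] by simp
  also have "\<dots> = QM (FM \<mu>) (induced_family FM y ?A x)"
    unfolding induced_family_def
    using set_functor_comp[OF is_set_functor endofunctor_hom[OF \<Phi> \<alpha>(1)] endofunctor_hom[OF \<Phi> \<mu>_hom] y] .
  finally show ?thesis by simp
qed

lemma induced_family_eval:
  assumes \<Phi>: "endofunctor C FO FM" and \<gamma>: "\<gamma> \<in> hom C A0 (FO A0)"
    and \<alpha>: "\<alpha> \<in> hom C A0 A"
  shows "induced_family FM (QM \<gamma> x0) A (QM \<alpha> x0) = QM (Comp C (FM \<alpha>) \<gamma>) x0"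
  unfolding induced_family_def classifying_arrow_eval[OF \<alpha>]
  using set_functor_comp[OF is_set_functor \<gamma> endofunctor_hom[OF \<Phi> \<alpha>] x0] by simp

context
  fixes FO FM \<gamma>
  assumes \<Phi>: "automorphism C FO FM" and \<gamma>: "epi C \<gamma> A0 (FO A0)"
begin

lemma \<gamma>_hom: "\<gamma> \<in> hom C A0 (FO A0)"
  using \<gamma> unfolding epi_def by blast

lemma FM_comp_\<gamma>_hom:
  assumes "\<alpha> \<in> hom C A0 A"
  shows "Comp C (FM \<alpha>) \<gamma> \<in> hom C A0 (FO A)"
  using category_comp_hom[OF is_category \<gamma>_hom endofunctor_hom[OF automorphism_endofunctor[OF \<Phi>] assms]] .

lemma induced_family_hom:
  assumes A: "A \<in> Ob C" and a: "a \<in> QO A"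
  shows "induced_family FM (QM \<gamma> x0) A a \<in> QO (FO A)"
proof -
  note \<alpha> = classifying_arrow[OF A a]
  show ?thesis
    using induced_family_eval[OF automorphism_endofunctor[OF \<Phi>] \<gamma>_hom \<alpha>(1)]
      set_functor_map_hom[OF is_set_functor FM_comp_\<gamma>_hom[OF \<alpha>(1)] x0] \<alpha>(2) by simp
qed

lemma induced_family_inj_on:
  assumes A: "A \<in> Ob C"
  shows "inj_on (induced_family FM (QM \<gamma> x0) A) (QO A)"
proof (rule inj_onI)
  fix a b assume a: "a \<in> QO A" and b: "b \<in> QO A"
    and ab: "induced_family FM (QM \<gamma> x0) A a = induced_family FM (QM \<gamma> x0) A b"
  note \<alpha> = classifying_arrow[OF A a] and \<beta> = classifying_arrow[OF A b]
  note \<Phi>' = automorphism_endofunctor[OF \<Phi>]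
  have "Comp C (FM (classifying_arrow A a)) \<gamma> = Comp C (FM (classifying_arrow A b)) \<gamma>"
    using hom_from_A0_eqI[OF FM_comp_\<gamma>_hom[OF \<alpha>(1)] FM_comp_\<gamma>_hom[OF \<beta>(1)]] ab
      induced_family_eval[OF \<Phi>' \<gamma>_hom \<alpha>(1)] induced_family_eval[OF \<Phi>' \<gamma>_hom \<beta>(1)] \<alpha>(2) \<beta>(2)
    by simp
  then have "FM (classifying_arrow A a) = FM (classifying_arrow A b)"
    using epi_cancel[OF \<gamma> endofunctor_hom[OF \<Phi>' \<alpha>(1)] endofunctor_hom[OF \<Phi>' \<beta>(1)]] by blast
  then have "classifying_arrow A a = classifying_arrow A b"
    using automorphism_arrow_inj[OF \<Phi> \<alpha>(1) \<beta>(1)] by blast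
  then show "a = b" using \<alpha>(2) \<beta>(2) by metis
qed

lemma induced_family_separates:
  assumes A: "A \<in> Ob C" and f: "f \<in> hom C (FO A) D" and g: "g \<in> hom C (FO A) D"
    and agree: "\<And>a. a \<in> QO A \<Longrightarrow>
      QM f (induced_family FM (QM \<gamma> x0) A a) = QM g (induced_family FM (QM \<gamma> x0) A a)"
  shows "f = g"
proof -
  note \<Phi>' = automorphism_endofunctor[OF \<Phi>]
  obtain D' where D': "D' \<in> Ob C" "FO D' = D"
    using automorphism_obj_surj[OF \<Phi>] category_hom_objects[OF is_category f] by blast
  obtain f' where f': "f' \<in> hom C A D'" "FM f' = f"
    using automorphism_full[OF is_category \<Phi> A D'(1)] f D'(2) by blast
  obtain g' where g': "g' \<in> hom C A D'" "FM g' = g"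
    using automorphism_full[OF is_category \<Phi> A D'(1)] g D'(2) by blast
  have "Comp C f' \<alpha> = Comp C g' \<alpha>" if \<alpha>: "\<alpha> \<in> hom C A0 A" for \<alpha>
  proof -
    note F\<alpha> = endofunctor_hom[OF \<Phi>' \<alpha>]
    have "QM f (QM (Comp C (FM \<alpha>) \<gamma>) x0) = QM g (QM (Comp C (FM \<alpha>) \<gamma>) x0)"
      using agree[OF set_functor_map_hom[OF is_set_functor \<alpha> x0]] induced_family_eval[OF \<Phi>' \<gamma>_hom \<alpha>]
      by simp
    then have "Comp C f (Comp C (FM \<alpha>) \<gamma>) = Comp C g (Comp C (FM \<alpha>) \<gamma>)"
      using hom_from_A0_eqI category_comp_hom[OF is_category FM_comp_\<gamma>_hom[OF \<alpha>]] f g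
        set_functor_comp[OF is_set_functor FM_comp_\<gamma>_hom[OF \<alpha>] _ x0] by metis
    then have "Comp C (Comp C f (FM \<alpha>)) \<gamma> = Comp C (Comp C g (FM \<alpha>)) \<gamma>"
      using category_comp_assoc[OF is_category \<gamma>_hom F\<alpha>] f g by simp
    then have "Comp C f (FM \<alpha>) = Comp C g (FM \<alpha>)"
      using epi_cancel[OF \<gamma>] category_comp_hom[OF is_category F\<alpha>] f g by blast
    then have "FM (Comp C f' \<alpha>) = FM (Comp C g' \<alpha>)"
      using endofunctor_comp[OF \<Phi>' \<alpha>] f' g' by simp
    then show ?thesis
      using automorphism_arrow_inj[OF \<Phi>] category_comp_hom[OF is_category \<alpha>] f'(1) g'(1) by blast
  qed
  then have "f' = g'" using A0_separates[OF f'(1) g'(1)] by blast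
  then show "f = g" using f'(2) g'(2) by simp
qed

lemma induced_family_C_bijection:
  assumes "A \<in> Ob C"
  shows "C_bijection C QO QM A (FO A) (induced_family FM (QM \<gamma> x0) A)"
  unfolding C_bijection_def
  using induced_family_hom induced_family_inj_on induced_family_separates assms by blast

end

lemma automorphism_potentially_quasi_inner:
  assumes enough: "cond_2Q C QO QM A0" and \<Phi>: "automorphism C FO FM"
  shows "potentially_quasi_inner C QO QM FO FM"
proof -
  obtain A1 where A1: "A1 \<in> Ob C" "FO A1 = A0" using automorphism_obj_surj[OF \<Phi> A0] .
  obtain \<pi> where \<pi>: "\<pi> \<in> hom C A1 A0" "QM \<pi> ` QO A1 = QO A0"
    using enough A1 unfolding cond_2Q_def by blast
  have "epi C (FM \<pi>) A0 (FO A0)"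
    using automorphism_preserves_epi[OF is_category \<Phi> surjective_map_imp_epi[OF is_category faithful \<pi>]]
      A1(2) by simp
  moreover have "QM \<gamma> x0 \<in> QO (FO A0)" if "epi C \<gamma> A0 (FO A0)" for \<gamma>
    using set_functor_map_hom[OF is_set_functor _ x0] that unfolding epi_def by blast
  ultimately show ?thesis
    unfolding potentially_quasi_inner_def
    using induced_family_C_bijection[OF \<Phi>]
      induced_family_natural[OF automorphism_endofunctor[OF \<Phi>]] by blast
qed

end

theorem theorem1:
  fixes C :: "('o, 'm) cat" and QO :: "'o \<Rightarrow> 'e set" and QM :: "'m \<Rightarrow> 'e \<Rightarrow> 'e"
  assumes "category C"
    and "faithful_set_functor C QO QM"
    and "A0 \<in> Ob C" and "x0 \<in> QO A0"
    and "cond_1Q C QO QM A0 x0"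
    and "cond_2Q C QO QM A0"
  shows "\<forall>FO FM. automorphism C FO FM \<longrightarrow> potentially_quasi_inner C QO QM FO FM"
proof -
  interpret represented_faithful_functor C QO QM A0 x0
    using assms(1-5) by unfold_locales
  show ?thesis using automorphism_potentially_quasi_inner[OF assms(6)] by blast
qed

end
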